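(* The three-qubit Fredkin gate $F_3=|0\rangle\langle0|\otimes I_2\otimes I_2+|1\rangle\langle1|\otimes \mathrm{SWAP}$, where $\mathrm{SWAP}|b,c\rangle=|c,b\rangle$ for $b,c\in\{0,1\}$, has $\mathrm{sr}(F_3)=4$.
   Context: $I_2$ is the $2\times 2$ identity; $\{|0\rangle,|1\rangle\}$ is the standard basis of $\mathbb{C}^2$. For a matrix $U$ on $\mathbb{C}^2\otimes\mathbb{C}^2\otimes\mathbb{C}^2$ (systems $A,B,C$), its Schmidt rank $\mathrm{sr}(U)$ is the least integer $r$ such that $U=\sum_{j=1}^r A_j\otimes B_j\otimes C_j$ with $A_j,B_j,C_j$ complex $2\times 2$ matrices (i.e. the tensor rank of $U$). *)

theory Defs
  imports Complex_Main
begin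

text \<open>Qubit basis index: False = |0>, True = |1>.
  An operator on C^2 (x) C^2 (x) C^2 (systems A,B,C) is given by its matrix entries
  U (a,b,c) (a',b',c') = <a b c| U |a' b' c'>.\<close>

type_synonym qmat = "bool \<Rightarrow> bool \<Rightarrow> complex"
type_synonym op3 = "bool \<times> bool \<times> bool \<Rightarrow> bool \<times> bool \<times> bool \<Rightarrow> complex"

definition tensor3 :: "qmat \<Rightarrow> qmat \<Rightarrow> qmat \<Rightarrow> op3" where
  "tensor3 A B C = (\<lambda>(a,b,c) (a',b',c'). A a a' * B b b' * C c c')"

definition schmidt_rank :: "op3 \<Rightarrow> nat" where
  "schmidt_rank U = (LEAST r. \<exists>As Bs Cs :: nat \<Rightarrow> qmat.
      U = (\<lambda>x y. \<Sum>j<r. tensor3 (As j) (Bs j) (Cs j) x y))"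

definition id2 :: qmat where "id2 = (\<lambda>i j. if i = j then 1 else 0)"

definition proj2 :: "bool \<Rightarrow> qmat" where "proj2 k = (\<lambda>i j. if i = k \<and> j = k then 1 else 0)"

definition swap2 :: "bool \<times> bool \<Rightarrow> bool \<times> bool \<Rightarrow> complex" where
  "swap2 = (\<lambda>(b,c) (b',c'). if b = c' \<and> c = b' then 1 else 0)"

definition fredkin :: op3 where
  "fredkin = (\<lambda>(a,b,c) (a',b',c').
      proj2 False a a' * id2 b b' * id2 c c' + proj2 True a a' * swap2 (b,c) (b',c'))"

end

theory Submission
  imports Defs "HOL-Analysis.Analysis"
begin

text \<open>The upper bound comes from the Pauli expansion
  SWAP = (I \<otimes> I + X \<otimes> X + Y \<otimes> Y + Z \<otimes> Z) / 2.
  For the lower bound, restrict a decomposition of F3 to the block a = a' = 1, which is SWAP,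
  and realign SWAP by regrouping its indices as (c',c) \<times> (b,b'): the realigned matrix is the
  4 \<times> 4 identity, while every elementary tensor becomes a rank-one matrix. The identity of
  size n is not a sum of fewer than n rank-one matrices.\<close>

lemma mat_1_ne_sum_outer:
  fixes u v :: "nat \<Rightarrow> 'a::field ^ 'n"
  assumes r: "r < CARD('n)"
  shows "(\<chi> i l. \<Sum>j<r. u j $ i * v j $ l) \<noteq> mat 1"
proof
  assume eq: "(\<chi> i l. \<Sum>j<r. u j $ i * v j $ l) = mat 1"
  obtain h :: "nat \<Rightarrow> 'n" where h: "bij_betw h {0..<CARD('n)} UNIV"
    using ex_bij_betw_nat_finite[of "UNIV :: 'n set"] by auto
  define e where "e = inv_into {0..<CARD('n)} h"
  have e: "bij_betw e UNIV {..<CARD('n)}"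
    using bij_betw_inv_into[OF h] by (simp add: e_def atLeast0LessThan)
  define U :: "'a ^ 'n ^ 'n" where "U = (\<chi> i k. if e k < r then u (e k) $ i else 0)"
  define V :: "'a ^ 'n ^ 'n" where "V = (\<chi> k l. if e k < r then v (e k) $ l else 0)"
  have "U ** V = mat 1"
  proof -
    have "(U ** V) $ i $ l = (\<Sum>j<r. u j $ i * v j $ l)" for i l
    proof -
      have "(U ** V) $ i $ l = (\<Sum>k\<in>UNIV. (\<lambda>j. if j < r then u j $ i * v j $ l else 0) (e k))"
        by (simp add: matrix_matrix_mult_def U_def V_def) (rule sum.cong, auto)
      also have "\<dots> = (\<Sum>j<CARD('n). if j < r then u j $ i * v j $ l else 0)"
        by (rule sum.reindex_bij_betw[OF e])
      also have "\<dots> = (\<Sum>j<r. u j $ i * v j $ l)"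
        using r by (simp add: sum.If_cases) (rule sum.cong, auto)
      finally show ?thesis .
    qed
    then show ?thesis
      using eq by (simp add: vec_eq_iff)
  qed
  then have "det U * det V = 1"
    by (metis det_mul det_I)
  moreover have "column (h (CARD('n) - 1)) U = 0"
  proof -
    have "e (h (CARD('n) - 1)) = CARD('n) - 1"
      using h by (simp add: e_def bij_betw_def)
    then show ?thesis
      using r by (simp add: column_def U_def vec_eq_iff)
  qed
  then have "det U = 0"
    by (rule det_zero_column)
  ultimately show False
    by simp
qed

lemma fredkin_one_one_block:
  "fredkin (True, b, c) (True, b', c') = (if (b, b') = (c', c) then 1 else 0)"
  by (auto simp: fredkin_def proj2_def swap2_def)

lemma fredkin_sum_tensor3_length_ge:
  fixes r :: nat
  assumes eq: "fredkin = (\<lambda>x y. \<Sum>j<r. tensor3 (As j) (Bs j) (Cs j) x y)"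
  shows "4 \<le> r"
proof (rule ccontr)
  assume "\<not> 4 \<le> r"
  then have r: "r < CARD(bool \<times> bool)"
    by simp
  define u :: "nat \<Rightarrow> complex ^ (bool \<times> bool)" where
    "u j = (\<chi> p. As j True True * Cs j (snd p) (fst p))" for j
  define v :: "nat \<Rightarrow> complex ^ (bool \<times> bool)" where
    "v j = (\<chi> q. Bs j (fst q) (snd q))" for j
  have "(\<chi> p q. \<Sum>j<r. u j $ p * v j $ q) = (mat 1 :: complex ^ (bool \<times> bool) ^ (bool \<times> bool))"
  proof -
    have "(\<Sum>j<r. u j $ (c', c) * v j $ (b, b')) = (if (c', c) = (b, b') then 1 else 0)"
      for b b' c c'
      using fun_cong[OF fun_cong[OF eq, of "(True, b, c)"], of "(True, b', c')"]
      by (auto simp: u_def v_def tensor3_def fredkin_one_one_block mult_ac)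
    then show ?thesis
      by (simp add: vec_eq_iff mat_def split_paired_all)
  qed
  with mat_1_ne_sum_outer[OF r] show False
    by blast
qed

lemma fredkin_eq_sum_tensor3_4:
  "\<exists>As Bs Cs :: nat \<Rightarrow> qmat. fredkin = (\<lambda>x y. \<Sum>j<4. tensor3 (As j) (Bs j) (Cs j) x y)"
proof -
  \<comment> \<open>B_j = I, X, iY, Z; the coefficient of (iY) \<otimes> (iY) = -Y \<otimes> Y carries the sign\<close>
  define As :: "nat \<Rightarrow> qmat" where
    "As j = (if j = 0 then (\<lambda>a a'. if a = a' then (if a then 1/2 else 1) else 0)
       else if j = 2 then (\<lambda>a a'. if a \<and> a' then -1/2 else 0)
       else (\<lambda>a a'. if a \<and> a' then 1/2 else 0))" for j
  define Bs :: "nat \<Rightarrow> qmat" where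
    "Bs j = (if j = 0 then id2
       else if j = 1 then (\<lambda>b b'. if b \<noteq> b' then 1 else 0)
       else if j = 2 then (\<lambda>b b'. if b \<noteq> b' then (if b then -1 else 1) else 0)
       else (\<lambda>b b'. if b = b' then (if b then -1 else 1) else 0))" for j
  have "fredkin = (\<lambda>x y. \<Sum>j<4. tensor3 (As j) (Bs j) (Bs j) x y)"
  proof (intro ext)
    fix x y :: "bool \<times> bool \<times> bool"
    show "fredkin x y = (\<Sum>j<4. tensor3 (As j) (Bs j) (Bs j) x y)"
      by (cases x; cases y) (auto simp: fredkin_def tensor3_def As_def Bs_def id2_def
          proj2_def swap2_def lessThan_Suc numeral_eq_Suc)
  qed
  then show ?thesis
    by blast
qed

theorem mainTheorem11:
  shows "schmidt_rank fredkin = 4"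
  unfolding schmidt_rank_def
proof (rule Least_equality)
  show "\<exists>As Bs Cs :: nat \<Rightarrow> qmat. fredkin = (\<lambda>x y. \<Sum>j<4. tensor3 (As j) (Bs j) (Cs j) x y)"
    by (rule fredkin_eq_sum_tensor3_4)
next
  fix r
  assume "\<exists>As Bs Cs :: nat \<Rightarrow> qmat. fredkin = (\<lambda>x y. \<Sum>j<r. tensor3 (As j) (Bs j) (Cs j) x y)"
  then show "4 \<le> r"
    using fredkin_sum_tensor3_length_ge by blast
qed

end
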